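(* Let $\mathcal{A}$ be a complete rpoNFA with a single initial state and depth $k$. Then $L(\mathcal{A})$ is $k$-$\mathcal{R}$-trivial.
   Context: An NFA $\mathcal{A}=(Q,\Sigma,\cdot,I,F)$ is complete if $q\cdot a\neq\emptyset$ for all $q,a$. A poNFA is an NFA whose reachability relation is a partial order (only self-loops as cycles); an rpoNFA is a poNFA such that $q\in q\cdot a$ implies $q\cdot a=\{q\}$. The depth is the number of input symbols on a longest simple path (pairwise distinct states) starting in an initial state. $\mathrm{sub}_k(v)$ is the set of subsequences of $v$ of length at most $k$; $u\sim_k v$ iff $\mathrm{sub}_k(u)=\mathrm{sub}_k(v)$; $x\sim^{\mathcal{R}}_k y$ iff each prefix of $x$ is $\sim_k$-equivalent to some prefix of $y$ and vice versa. A language is $k$-$\mathcal{R}$-trivial if it is a union of $\sim^{\mathcal{R}}_k$-classes. *)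

theory Defs
  imports Main
begin

definition nfa :: "'q set \<Rightarrow> 'a set \<Rightarrow> ('q \<Rightarrow> 'a \<Rightarrow> 'q set) \<Rightarrow> 'q set \<Rightarrow> 'q set \<Rightarrow> bool" where
  "nfa Q Sig delta I F \<longleftrightarrow> finite Q \<and> finite Sig \<and> I \<subseteq> Q \<and> F \<subseteq> Q \<and>
     (\<forall>q\<in>Q. \<forall>a\<in>Sig. delta q a \<subseteq> Q)"

definition complete_nfa :: "'q set \<Rightarrow> 'a set \<Rightarrow> ('q \<Rightarrow> 'a \<Rightarrow> 'q set) \<Rightarrow> bool" where
  "complete_nfa Q Sig delta \<longleftrightarrow> (\<forall>q\<in>Q. \<forall>a\<in>Sig. delta q a \<noteq> {})"

fun delta_star :: "('q \<Rightarrow> 'a \<Rightarrow> 'q set) \<Rightarrow> 'q set \<Rightarrow> 'a list \<Rightarrow> 'q set" where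
  "delta_star delta S [] = S"
| "delta_star delta S (a # w) = delta_star delta (\<Union>q\<in>S. delta q a) w"

definition lang :: "'a set \<Rightarrow> ('q \<Rightarrow> 'a \<Rightarrow> 'q set) \<Rightarrow> 'q set \<Rightarrow> 'q set \<Rightarrow> 'a list set" where
  "lang Sig delta I F = {w \<in> lists Sig. delta_star delta I w \<inter> F \<noteq> {}}"

definition reach :: "'a set \<Rightarrow> ('q \<Rightarrow> 'a \<Rightarrow> 'q set) \<Rightarrow> 'q \<Rightarrow> 'q \<Rightarrow> bool" where
  "reach Sig delta p q \<longleftrightarrow> (\<exists>w \<in> lists Sig. q \<in> delta_star delta {p} w)"

text \<open>poNFA: the reachability relation (reflexive and transitive by construction)
  is a partial order on Q, i.e. antisymmetric.\<close>
definition po_nfa :: "'q set \<Rightarrow> 'a set \<Rightarrow> ('q \<Rightarrow> 'a \<Rightarrow> 'q set) \<Rightarrow> 'q set \<Rightarrow> 'q set \<Rightarrow> bool" where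
  "po_nfa Q Sig delta I F \<longleftrightarrow> nfa Q Sig delta I F \<and>
     (\<forall>p\<in>Q. \<forall>q\<in>Q. reach Sig delta p q \<and> reach Sig delta q p \<longrightarrow> p = q)"

definition rpo_nfa :: "'q set \<Rightarrow> 'a set \<Rightarrow> ('q \<Rightarrow> 'a \<Rightarrow> 'q set) \<Rightarrow> 'q set \<Rightarrow> 'q set \<Rightarrow> bool" where
  "rpo_nfa Q Sig delta I F \<longleftrightarrow> po_nfa Q Sig delta I F \<and>
     (\<forall>q\<in>Q. \<forall>a\<in>Sig. q \<in> delta q a \<longrightarrow> delta q a = {q})"

definition simple_path_from_init ::
  "'a set \<Rightarrow> ('q \<Rightarrow> 'a \<Rightarrow> 'q set) \<Rightarrow> 'q set \<Rightarrow> 'q list \<Rightarrow> 'a list \<Rightarrow> bool" where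
  "simple_path_from_init Sig delta I qs w \<longleftrightarrow>
     length qs = Suc (length w) \<and> w \<in> lists Sig \<and> hd qs \<in> I \<and> distinct qs \<and>
     (\<forall>i < length w. qs ! Suc i \<in> delta (qs ! i) (w ! i))"

definition depth :: "'a set \<Rightarrow> ('q \<Rightarrow> 'a \<Rightarrow> 'q set) \<Rightarrow> 'q set \<Rightarrow> nat" where
  "depth Sig delta I = Max {length w | w qs. simple_path_from_init Sig delta I qs w}"

definition sub_k :: "nat \<Rightarrow> 'a list \<Rightarrow> 'a list set" where
  "sub_k k v = {u \<in> set (subseqs v). length u \<le> k}"

definition sim_k :: "nat \<Rightarrow> 'a list \<Rightarrow> 'a list \<Rightarrow> bool" where
  "sim_k k u v \<longleftrightarrow> sub_k k u = sub_k k v"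

definition sim_R_k :: "nat \<Rightarrow> 'a list \<Rightarrow> 'a list \<Rightarrow> bool" where
  "sim_R_k k x y \<longleftrightarrow>
     (\<forall>i \<le> length x. \<exists>j \<le> length y. sim_k k (take i x) (take j y)) \<and>
     (\<forall>j \<le> length y. \<exists>i \<le> length x. sim_k k (take j y) (take i x))"

definition k_R_trivial :: "nat \<Rightarrow> 'a set \<Rightarrow> 'a list set \<Rightarrow> bool" where
  "k_R_trivial k Sig L \<longleftrightarrow>
     (\<forall>x \<in> lists Sig. \<forall>y \<in> lists Sig. sim_R_k k x y \<longrightarrow> (x \<in> L \<longleftrightarrow> y \<in> L))"

end

theory Submission imports Defs "HOL-Library.Sublist" begin

text \<open>Consider a simple path from i ending in a state q, with n symbols to go until the
  depth k. By induction on n, \<open>sim_R_k n\<close>-equivalent words are accepted from q alike.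
  In an rpoNFA, q loops on each letter of G = {c. q \<in> delta q c} and leaves q on every
  other letter. If x uses only letters of G, so does y, and both runs stay in q. Otherwise
  \<open>sim_R_k (Suc n)\<close> forces x = x0 a x' and y = y0 a y' with x0, y0 over G and the same
  letter a outside G, and then x', y' are \<open>sim_R_k n\<close>-equivalent; every a-successor of q
  extends the simple path (reachability is antisymmetric), so the induction hypothesis
  applies. For n = 0 the path is already longest, so by completeness q loops on every letter.\<close>

lemma sub_k_iff: "s \<in> sub_k n u \<longleftrightarrow> subseq s u \<and> length s \<le> n"
  by (simp add: sub_k_def)

lemma sim_k_sym: "sim_k n u v \<Longrightarrow> sim_k n v u"
  by (simp add: sim_k_def)

lemma sim_k_set_subset: "sim_k (Suc n) u v \<Longrightarrow> set u \<subseteq> set v"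
proof
  fix c assume sim: "sim_k (Suc n) u v" and "c \<in> set u"
  then have "[c] \<in> sub_k (Suc n) u" by (simp add: sub_k_iff subseq_singleton_left)
  with sim have "[c] \<in> sub_k (Suc n) v" by (simp add: sim_k_def)
  then show "c \<in> set v" by (simp add: sub_k_iff subseq_singleton_left)
qed

lemma subseq_Cons_skip: "a \<notin> set y0 \<Longrightarrow> subseq (a # s) (y0 @ a # v) \<Longrightarrow> subseq s v"
  by (induct y0) (auto simp: subseq_Cons')

text \<open>Subsequences a s of y0 a v with a not in y0 are exactly those with s a subsequence of v.\<close>
lemma sim_k_cancel_first_occurrence:
  assumes "a \<notin> set x0" "a \<notin> set y0" "sim_k (Suc n) (x0 @ a # u) (y0 @ a # v)"
  shows "sim_k n u v"
  unfolding sim_k_def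
proof (rule set_eqI)
  fix s
  have "s \<in> sub_k n u \<longleftrightarrow> a # s \<in> sub_k (Suc n) (x0 @ a # u)"
    using assms(1) by (auto simp: sub_k_iff intro: subseq_Cons_skip list_emb_append2)
  moreover have "s \<in> sub_k n v \<longleftrightarrow> a # s \<in> sub_k (Suc n) (y0 @ a # v)"
    using assms(2) by (auto simp: sub_k_iff intro: subseq_Cons_skip list_emb_append2)
  ultimately show "s \<in> sub_k n u \<longleftrightarrow> s \<in> sub_k n v"
    using assms(3) by (simp add: sim_k_def)
qed

lemma sim_R_k_sym: "sim_R_k n x y \<Longrightarrow> sim_R_k n y x"
  by (simp add: sim_R_k_def)

lemma sim_R_k_set_subset: "sim_R_k (Suc n) x y \<Longrightarrow> set y \<subseteq> set x"
proof -
  assume "sim_R_k (Suc n) x y"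
  then obtain i where "sim_k (Suc n) y (take i x)"
    unfolding sim_R_k_def by (metis order_refl take_all)
  then have "set y \<subseteq> set (take i x)" by (rule sim_k_set_subset)
  then show ?thesis using set_take_subset by (rule order_trans)
qed

lemma take_append_Cons_beyond:
  assumes "c \<in> set (take j (y0 @ b # y'))" "c \<notin> set y0"
  shows "take j (y0 @ b # y') = y0 @ b # take (j - Suc (length y0)) y'"
proof -
  have "length y0 < j"
  proof (rule ccontr)
    assume "\<not> length y0 < j"
    then have "take j (y0 @ b # y') = take j y0" by simp
    with assms show False by (metis in_set_takeD)
  qed
  then obtain m where "j = Suc (length y0 + m)" by (auto simp: less_iff_Suc_add)
  then show ?thesis by simp
qed

lemma sim_R_k_half_cancel_first_occurrence:
  assumes sim: "\<forall>i\<le>length x. \<exists>j\<le>length y. sim_k (Suc n) (take i x) (take j y)"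
    and x: "x = x0 @ a # x'" and y: "y = y0 @ a # y'" and "a \<notin> set x0" "a \<notin> set y0"
  shows "\<forall>i\<le>length x'. \<exists>j\<le>length y'. sim_k n (take i x') (take j y')"
proof (intro allI impI)
  fix i assume "i \<le> length x'"
  then have "Suc (length x0) + i \<le> length x" using x by simp
  with sim obtain j where "sim_k (Suc n) (take (Suc (length x0) + i) x) (take j y)" by blast
  then have j: "sim_k (Suc n) (x0 @ a # take i x') (take j y)" using x by simp
  have "a \<in> set (take j y)" using sim_k_set_subset[OF j] by simp
  then have "take j y = y0 @ a # take (j - Suc (length y0)) y'"
    using take_append_Cons_beyond y \<open>a \<notin> set y0\<close> by metis
  then have "sim_k n (take i x') (take (j - Suc (length y0)) y')"
    using sim_k_cancel_first_occurrence[OF \<open>a \<notin> set x0\<close> \<open>a \<notin> set y0\<close>] j by simp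
  moreover have "take (j - Suc (length y0)) y' = take (min (j - Suc (length y0)) (length y')) y'"
    by (simp add: min_def)
  ultimately show "\<exists>j\<le>length y'. sim_k n (take i x') (take j y')"
    by (intro exI[of _ "min (j - Suc (length y0)) (length y')"]) simp
qed

lemma sim_R_k_cancel_first_occurrence:
  assumes "sim_R_k (Suc n) (x0 @ a # x') (y0 @ a # y')" "a \<notin> set x0" "a \<notin> set y0"
  shows "sim_R_k n x' y'"
  using assms sim_R_k_half_cancel_first_occurrence[of _ _ n x0 a x' y0 y']
    sim_R_k_half_cancel_first_occurrence[of _ _ n y0 a y' x0 x']
  unfolding sim_R_k_def by blast

lemma sim_R_k_first_letter_outside:
  assumes sim: "sim_R_k (Suc n) (x0 @ a # x') (y0 @ b # y')"
    and "set x0 \<subseteq> G" "a \<notin> G" "set y0 \<subseteq> G" "b \<notin> G"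
  shows "b = a"
proof -
  have "Suc (length x0) \<le> length (x0 @ a # x')" by simp
  with sim obtain j where "sim_k (Suc n) (take (Suc (length x0)) (x0 @ a # x')) (take j (y0 @ b # y'))"
    unfolding sim_R_k_def by blast
  then have j: "sim_k (Suc n) (x0 @ [a]) (take j (y0 @ b # y'))" by simp
  have "a \<in> set (take j (y0 @ b # y'))" using sim_k_set_subset[OF j] by simp
  moreover have "a \<notin> set y0" using assms by auto
  ultimately have "b \<in> set (take j (y0 @ b # y'))"
    using take_append_Cons_beyond[of a j y0 b y'] by simp
  then have "b \<in> set (x0 @ [a])" using sim_k_set_subset[OF sim_k_sym[OF j]] by blast
  then show ?thesis using assms by auto
qed

lemma split_first_outside:
  assumes "\<not> set x \<subseteq> G"
  obtains x0 a x' where "x = x0 @ a # x'" "set x0 \<subseteq> G" "a \<notin> G"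
proof -
  obtain a x' where d: "dropWhile (\<lambda>c. c \<in> G) x = a # x'"
    using assms by (cases "dropWhile (\<lambda>c. c \<in> G) x") auto
  have "x = takeWhile (\<lambda>c. c \<in> G) x @ a # x'" using d takeWhile_dropWhile_id by metis
  moreover have "set (takeWhile (\<lambda>c. c \<in> G) x) \<subseteq> G" by (auto dest: set_takeWhileD)
  moreover have "a \<notin> G" using d by (metis hd_dropWhile list.sel(1) list.simps(3))
  ultimately show ?thesis using that by blast
qed

lemma delta_star_union: "delta_star delta S w = (\<Union>q\<in>S. delta_star delta {q} w)"
proof (induct w arbitrary: S)
  case (Cons a w)
  show ?case by (simp add: Cons[of "\<Union>q\<in>S. delta q a"] Cons[of "delta _ a"])
qed simp

lemma delta_star_append: "delta_star delta S (u @ v) = delta_star delta (delta_star delta S u) v"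
  by (induct u arbitrary: S) auto

lemma delta_star_mono: "S \<subseteq> T \<Longrightarrow> delta_star delta S w \<subseteq> delta_star delta T w"
  by (metis delta_star_union SUP_subset_mono order_refl)

lemma delta_star_self_loops:
  "\<forall>c\<in>set x. delta q c = {q} \<Longrightarrow> delta_star delta {q} x = {q}"
  by (induct x) auto

lemma UN_Int_nonempty_cong:
  "(\<And>r. r \<in> A \<Longrightarrow> X r \<inter> F \<noteq> {} \<longleftrightarrow> Y r \<inter> F \<noteq> {})
    \<Longrightarrow> (\<Union>r\<in>A. X r) \<inter> F \<noteq> {} \<longleftrightarrow> (\<Union>r\<in>A. Y r) \<inter> F \<noteq> {}"
  by blast

lemma delta_star_first_exit:
  assumes "\<forall>c\<in>set x0. delta q c = {q}"
  shows "delta_star delta {q} (x0 @ a # x') = (\<Union>r\<in>delta q a. delta_star delta {r} x')"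
  using assms
  by (simp add: delta_star_append delta_star_self_loops delta_star_union[of _ "delta q a"])

lemma simple_path_length: "simple_path_from_init Sig delta I qs w \<Longrightarrow> length qs = Suc (length w)"
  by (simp add: simple_path_from_init_def)

lemma simple_path_last: "simple_path_from_init Sig delta I qs w \<Longrightarrow> last qs = qs ! length w"
  using simple_path_length[of Sig delta I qs w] last_conv_nth[of qs] by force

lemma simple_path_in_states:
  assumes "nfa Q Sig delta I F" and p: "simple_path_from_init Sig delta I qs w"
  shows "set qs \<subseteq> Q"
proof -
  have "qs ! j \<in> Q" if "j < length qs" for j
    using that
  proof (induct j)
    case 0
    then show ?case using assms
      by (auto simp: nfa_def simple_path_from_init_def hd_conv_nth[symmetric])
  next
    case (Suc j)
    then have "j < length w" by (simp add: simple_path_length[OF p])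
    with Suc p assms(1) show ?case
      unfolding nfa_def simple_path_from_init_def by (meson Suc_lessD in_listsD nth_mem subsetD)
  qed
  then show ?thesis by (auto simp: in_set_conv_nth)
qed

lemma simple_path_last_in_states:
  "nfa Q Sig delta I F \<Longrightarrow> simple_path_from_init Sig delta I qs w \<Longrightarrow> last qs \<in> Q"
  using simple_path_in_states simple_path_length
  by (metis last_in_set list.size(3) nat.distinct(1) subsetD)

lemma simple_path_reaches_last:
  assumes p: "simple_path_from_init Sig delta I qs w" and "j \<le> length w"
  shows "reach Sig delta (qs ! j) (last qs)"
  using \<open>j \<le> length w\<close>
proof (induct j rule: inc_induct)
  case base
  show ?case using simple_path_last[OF p] by (auto simp: reach_def intro: bexI[of _ "[]"])
next
  case (step j)
  then obtain v where v: "v \<in> lists Sig" "last qs \<in> delta_star delta {qs ! Suc j} v"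
    by (auto simp: reach_def)
  have "qs ! Suc j \<in> delta (qs ! j) (w ! j)" "w ! j \<in> Sig"
    using p step(2) by (auto simp: simple_path_from_init_def)
  then have "last qs \<in> delta_star delta {qs ! j} (w ! j # v)"
    using v(2) delta_star_mono[of "{qs ! Suc j}" "delta (qs ! j) (w ! j)" delta v] by auto
  then show ?case using v(1) \<open>w ! j \<in> Sig\<close> unfolding reach_def by (meson Cons_in_lists_iff)
qed

lemma simple_path_length_le_depth:
  assumes nfa: "nfa Q Sig delta I F" and p: "simple_path_from_init Sig delta I qs w"
  shows "length w \<le> depth Sig delta I"
proof -
  let ?S = "{length w | w qs. simple_path_from_init Sig delta I qs w}"
  have "?S \<subseteq> {..card Q}"
  proof
    fix l assume "l \<in> ?S"
    then obtain w' qs' where l: "l = length w'" and p': "simple_path_from_init Sig delta I qs' w'"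
      by blast
    have "length qs' = card (set qs')"
      using p' by (simp add: simple_path_from_init_def distinct_card)
    also have "\<dots> \<le> card Q"
      using simple_path_in_states[OF nfa p'] nfa by (simp add: nfa_def card_mono)
    finally show "l \<in> {..card Q}" using simple_path_length[OF p'] l by simp
  qed
  then have "finite ?S" using finite_subset by blast
  moreover have "length w \<in> ?S" using p by blast
  ultimately show ?thesis unfolding depth_def by simp
qed

text \<open>A new state r cannot already lie on the path: it would then reach the last
  state, which reaches r, contradicting antisymmetry of reachability.\<close>
lemma simple_path_snoc:
  assumes po: "po_nfa Q Sig delta I F" and p: "simple_path_from_init Sig delta I qs w"
    and a: "a \<in> Sig" and r: "r \<in> delta (last qs) a" "r \<noteq> last qs"
  shows "simple_path_from_init Sig delta I (qs @ [r]) (w @ [a])"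
proof -
  have nfa: "nfa Q Sig delta I F" using po by (simp add: po_nfa_def)
  have len: "length qs = Suc (length w)" using simple_path_length[OF p] .
  have qQ: "last qs \<in> Q" using simple_path_last_in_states[OF nfa p] .
  have rQ: "r \<in> Q" using nfa qQ a r(1) unfolding nfa_def by blast
  have "reach Sig delta (last qs) r"
    unfolding reach_def using a r(1) by (intro bexI[of _ "[a]"]) auto
  then have "r \<notin> set qs"
    using simple_path_reaches_last[OF p] po rQ qQ r(2) len
    by (auto simp: po_nfa_def in_set_conv_nth less_Suc_eq_le)
  moreover have "hd (qs @ [r]) = hd qs" using len by (cases qs) auto
  ultimately show ?thesis using p a r simple_path_last[OF p] len
    unfolding simple_path_from_init_def by (auto simp: nth_append less_Suc_eq)
qed

lemma rpo_self_loop: "rpo_nfa Q Sig delta I F \<Longrightarrow> q \<in> Q \<Longrightarrow> c \<in> Sig \<Longrightarrow> q \<in> delta q c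
  \<Longrightarrow> delta q c = {q}"
  by (simp add: rpo_nfa_def)

lemma complete_rpo_sink_at_depth:
  assumes rpo: "rpo_nfa Q Sig delta I F" and comp: "complete_nfa Q Sig delta"
    and p: "simple_path_from_init Sig delta I qs w" and "length w = depth Sig delta I"
    and c: "c \<in> Sig"
  shows "delta (last qs) c = {last qs}"
proof -
  have po: "po_nfa Q Sig delta I F" using rpo by (simp add: rpo_nfa_def)
  then have nfa: "nfa Q Sig delta I F" by (simp add: po_nfa_def)
  have qQ: "last qs \<in> Q" using simple_path_last_in_states[OF nfa p] .
  obtain r where r: "r \<in> delta (last qs) c" using comp qQ c by (auto simp: complete_nfa_def)
  have "r = last qs"
  proof (rule ccontr)
    assume "r \<noteq> last qs"
    from simple_path_length_le_depth[OF nfa simple_path_snoc[OF po p c r this]]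
    show False using \<open>length w = depth Sig delta I\<close> by simp
  qed
  then show ?thesis using rpo_self_loop[OF rpo qQ c] r by simp
qed

lemma complete_rpo_acceptance_invariant:
  assumes rpo: "rpo_nfa Q Sig delta I F" and comp: "complete_nfa Q Sig delta"
    and p: "simple_path_from_init Sig delta I qs w"
    and n: "length w + n = depth Sig delta I"
    and xy: "x \<in> lists Sig" "y \<in> lists Sig" "sim_R_k n x y"
  shows "delta_star delta {last qs} x \<inter> F \<noteq> {} \<longleftrightarrow> delta_star delta {last qs} y \<inter> F \<noteq> {}"
proof -
  have po: "po_nfa Q Sig delta I F" using rpo by (simp add: rpo_nfa_def)
  then have nfa: "nfa Q Sig delta I F" by (simp add: po_nfa_def)
  show ?thesis
    using p n xy
  proof (induct n arbitrary: qs w x y)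
    case 0
    have "delta (last qs) c = {last qs}" if "c \<in> Sig" for c
      using complete_rpo_sink_at_depth[OF rpo comp 0(1)] 0(2) that by simp
    then have "delta_star delta {last qs} z = {last qs}" if "z \<in> lists Sig" for z
      using that by (intro delta_star_self_loops) auto
    then show ?case using 0(3,4) by simp
  next
    case (Suc n)
    let ?q = "last qs"
    let ?G = "{c. ?q \<in> delta ?q c}"
    have qQ: "?q \<in> Q" using simple_path_last_in_states[OF nfa Suc(2)] .
    have loops: "\<forall>c\<in>set z. delta ?q c = {?q}" if "z \<in> lists Sig" "set z \<subseteq> ?G" for z
      using that rpo_self_loop[OF rpo qQ] by blast
    have sets: "set x = set y"
      using sim_R_k_set_subset[OF Suc(6)] sim_R_k_set_subset[OF sim_R_k_sym[OF Suc(6)]] by blast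
    show ?case
    proof (cases "set x \<subseteq> ?G")
      case True
      with sets have "set y \<subseteq> ?G" by simp
      have "delta_star delta {?q} x = {?q}" "delta_star delta {?q} y = {?q}"
        using loops[OF Suc(4) True] loops[OF Suc(5) \<open>set y \<subseteq> ?G\<close>]
        by (simp_all add: delta_star_self_loops)
      then show ?thesis by simp
    next
      case False
      then obtain x0 a x' where x: "x = x0 @ a # x'" "set x0 \<subseteq> ?G" "a \<notin> ?G"
        by (rule split_first_outside)
      from False sets have "\<not> set y \<subseteq> ?G" by simp
      then obtain y0 b y' where y: "y = y0 @ b # y'" "set y0 \<subseteq> ?G" "b \<notin> ?G"
        by (rule split_first_outside)
      have sim: "sim_R_k (Suc n) (x0 @ a # x') (y0 @ b # y')" using Suc(6) x(1) y(1) by simp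
      have "b = a" using sim_R_k_first_letter_outside[OF sim x(2,3) y(2,3)] .
      have "a \<notin> set x0" "a \<notin> set y0" using x(2,3) y(2) by auto
      with sim \<open>b = a\<close> have sim': "sim_R_k n x' y'"
        using sim_R_k_cancel_first_occurrence[of n x0 a x' y0 y'] by simp
      have "a \<in> Sig" "x0 \<in> lists Sig" "x' \<in> lists Sig" "y0 \<in> lists Sig" "y' \<in> lists Sig"
        using Suc(4,5) x(1) y(1) by auto
      have runs_x: "delta_star delta {?q} x = (\<Union>r\<in>delta ?q a. delta_star delta {r} x')"
        unfolding x(1) using loops[OF \<open>x0 \<in> lists Sig\<close> x(2)] by (rule delta_star_first_exit)
      have runs_y: "delta_star delta {?q} y = (\<Union>r\<in>delta ?q a. delta_star delta {r} y')"
        unfolding y(1) \<open>b = a\<close>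
        using loops[OF \<open>y0 \<in> lists Sig\<close> y(2)] by (rule delta_star_first_exit)
      have "delta_star delta {r} x' \<inter> F \<noteq> {} \<longleftrightarrow> delta_star delta {r} y' \<inter> F \<noteq> {}"
        if r: "r \<in> delta ?q a" for r
      proof -
        have "r \<noteq> ?q" using r x(3) by auto
        with simple_path_snoc[OF po Suc(2) \<open>a \<in> Sig\<close> r]
        have path: "simple_path_from_init Sig delta I (qs @ [r]) (w @ [a])" .
        have len: "length (w @ [a]) + n = depth Sig delta I" using Suc(3) by simp
        show ?thesis
          using Suc(1)[OF path len \<open>x' \<in> lists Sig\<close> \<open>y' \<in> lists Sig\<close> sim'] by simp
      qed
      then show ?thesis unfolding runs_x runs_y by (rule UN_Int_nonempty_cong)
    qed
  qed
qed

theorem lemma3: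
  fixes Q :: "'q set" and Sig :: "'a set" and delta :: "'q \<Rightarrow> 'a \<Rightarrow> 'q set"
    and i :: 'q and F :: "'q set" and k :: nat
  assumes "rpo_nfa Q Sig delta {i} F"
    and "complete_nfa Q Sig delta"
    and "depth Sig delta {i} = k"
  shows "k_R_trivial k Sig (lang Sig delta {i} F)"
  unfolding k_R_trivial_def
proof (intro ballI impI)
  fix x y assume xy: "x \<in> lists Sig" "y \<in> lists Sig" "sim_R_k k x y"
  have "simple_path_from_init Sig delta {i} [i] []"
    by (simp add: simple_path_from_init_def)
  from complete_rpo_acceptance_invariant[OF assms(1,2) this _ xy] assms(3)
  show "x \<in> lang Sig delta {i} F \<longleftrightarrow> y \<in> lang Sig delta {i} F"
    using xy by (simp add: lang_def)
qed

end
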